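(* Let $(T,\mathcal T,\mu)$ be a finite positive (not necessarily complete) measure space, $S$ a separable complete metric space, and $N$ a positive integer. Let $\Gamma$ be a multifunction from $T$ to nonempty finite subsets of $S$ of cardinality at most $N$, which is measurable with respect to the $\mu$-completion $\mathcal T_\mu$ of $\mathcal T$. Then there exist $n\le N$ measurable maps $s_i:T_i\to S$, $1\le i\le n$, such that: $T_i\in\mathcal T$ for $1\le i\le n$; there is a set $T_0\in\mathcal T$ of full $\mu$-measure such that $\Gamma(t)=\{s_i(t):t\in T_i,\ 1\le i\le n\}$ for all $t\in T_0$; and if $t\in T_i\cap T_j$ with $i\ne j$ then $s_i(t)\ne s_j(t)$.
   Context: A multifunction $\Gamma$ from $T$ to $S$ assigns to each $t\in T$ a nonempty subset $\Gamma(t)\subset S$; its graph is $G(\Gamma)=\{(t,s)\in T\times S:s\in\Gamma(t)\}$. $\Gamma$ is measurable with respect to a $\sigma$-algebra $\mathcal T'$ on $T$ if $G(\Gamma)\in\mathcal T'\otimes\mathcal B(S)$, where $\mathcal B(S)$ is the Borel $\sigma$-algebra of $S$. A map $s_i:T_i\to S$ is measurable when $T_i$ carries the trace of $\mathcal T$ and $S$ its Borel $\sigma$-algebra. *)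

theory Defs
  imports "HOL-Analysis.Analysis"
begin

end

theory Submission
  imports Defs
begin

text \<open>The graph \<open>G\<close> of \<open>\<Gamma>\<close> is a completion-measurable subset of \<open>T \<times> S\<close> whose
  sections have at most \<open>N\<close> points. Fix open sets \<open>U\<^sub>0, U\<^sub>1, \<dots>\<close> separating the points
  of \<open>S\<close>, and refine \<open>G\<close> step by step: at step \<open>n\<close> keep over each \<open>t\<close> only the points of
  the section lying in \<open>U\<^sub>n\<close>, provided there are any. In the limit every nonempty finite
  section shrinks to a single point, and every step is measurable because the projection of a
  set in \<open>\<T>\<^sub>\<mu> \<otimes> \<B>(S)\<close> to \<open>T\<close> is \<open>\<T>\<^sub>\<mu>\<close>-measurable (such sets are Suslin sets over
  rectangles with closed sides, Suslin sets are preserved by projection along a Polish factor,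
  and they are measurable for a complete finite measure). Removing the selected graph and
  repeating \<open>N\<close> times splits \<open>G\<close> into \<open>N\<close> disjoint measurable graphs of functions; their
  domains and the functions are \<open>\<T>\<^sub>\<mu>\<close>-measurable, so they agree with \<open>\<T>\<close>-measurable ones
  off a \<open>\<mu>\<close>-null set.\<close>

section \<open>The Suslin operation\<close>

definition suslin :: "(nat list \<Rightarrow> 'x set) \<Rightarrow> 'x set" where
  "suslin A = (\<Union>f. \<Inter>k. A (map f [0..<k]))"

lemma suslin_subset:
  assumes "\<And>s. A s \<subseteq> \<Omega>"
  shows "suslin A \<subseteq> \<Omega>"
proof
  fix t assume "t \<in> suslin A"
  then obtain f where "\<forall>k. t \<in> A (map f [0..<k])"
    unfolding suslin_def by blast
  from this[rule_format, of 0] show "t \<in> \<Omega>"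
    using assms by auto
qed

lemma suslin_const [simp]: "suslin (\<lambda>s. X) = X"
  unfolding suslin_def by simp

lemma map_upt_Suc_Cons: "map g [0..<Suc k] = g 0 # map (\<lambda>i. g (Suc i)) [0..<k]"
  by (induct k) auto

lemma mem_suslin_if_branching:
  assumes "t \<in> H []" and "\<And>s. t \<in> H s \<Longrightarrow> \<exists>j. t \<in> H (s @ [j])" and "\<And>s. H s \<subseteq> A s"
  shows "t \<in> suslin A"
proof -
  define pick where "pick s = (SOME j. t \<in> H (s @ [j]))" for s
  define path where "path n = ((\<lambda>s. s @ [pick s]) ^^ n) []" for n
  have path_Suc: "path (Suc n) = path n @ [pick (path n)]" for n
    by (simp add: path_def)
  have path_eq: "path n = map (\<lambda>i. pick (path i)) [0..<n]" for n
    by (induct n) (simp_all add: path_Suc path_def[of 0])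
  have "t \<in> H (path n)" for n
  proof (induct n)
    case 0
    then show ?case using assms(1) by (simp add: path_def)
  next
    case (Suc n)
    then show ?case
      using someI_ex[OF assms(2)[OF Suc]] by (simp add: path_Suc pick_def)
  qed
  then have "t \<in> A (map (\<lambda>i. pick (path i)) [0..<k])" for k
    using assms(3)[of "path k"] by (auto simp flip: path_eq)
  then show ?thesis
    unfolding suslin_def by blast
qed

definition suslin_extending :: "(nat list \<Rightarrow> 'x set) \<Rightarrow> nat list \<Rightarrow> 'x set" where
  "suslin_extending A s = {t. \<exists>f. map f [0..<length s] = s \<and> (\<forall>k. t \<in> A (map f [0..<k]))}"

lemma suslin_extending_subset: "suslin_extending A s \<subseteq> A s"
proof
  fix t assume "t \<in> suslin_extending A s"
  then obtain f where "map f [0..<length s] = s" "\<forall>k. t \<in> A (map f [0..<k])"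
    unfolding suslin_extending_def by blast
  then show "t \<in> A s"
    by (metis (no_types))
qed

lemma suslin_extending_branches: "suslin_extending A s \<subseteq> (\<Union>j. suslin_extending A (s @ [j]))"
proof
  fix t assume "t \<in> suslin_extending A s"
  then obtain f where f: "map f [0..<length s] = s" "\<forall>k. t \<in> A (map f [0..<k])"
    unfolding suslin_extending_def by blast
  have "map f [0..<length (s @ [f (length s)])] = s @ [f (length s)]"
    using f(1) by simp
  then have "t \<in> suslin_extending A (s @ [f (length s)])"
    unfolding suslin_extending_def using f(2) by blast
  then show "t \<in> (\<Union>j. suslin_extending A (s @ [j]))"
    by blast
qed

lemma suslin_subset_extending_Nil: "suslin A \<subseteq> suslin_extending A []"
proof
  fix t assume "t \<in> suslin A"
  then obtain f where "\<forall>k. t \<in> A (map f [0..<k])"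
    unfolding suslin_def by blast
  then show "t \<in> suslin_extending A []"
    unfolding suslin_extending_def by (intro CollectI exI[of _ f]) simp
qed

lemma measurable_envelope_within:
  assumes "emeasure M (space M) < \<infinity>" and "X \<subseteq> Y" and "Y \<in> sets M"
  shows "\<exists>H. H \<in> sets M \<and> X \<subseteq> H \<and> H \<subseteq> Y \<and> (\<forall>D\<in>sets M. D \<subseteq> H - X \<longrightarrow> D \<in> null_sets M)"
proof -
  have "X \<subseteq> space M"
    using assms(2,3) sets.sets_into_space by blast
  then obtain E where E: "measurable_envelope M X E"
    using measurable_envelopeI_countable_cover[of X "\<lambda>_. space M" M] assms(1) by auto
  have "E \<inter> Y \<in> sets M" "X \<subseteq> E \<inter> Y"
    using measurable_envelopeD(1,2)[OF E] assms(2,3) by auto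
  moreover have "D \<in> null_sets M" if "D \<in> sets M" "D \<subseteq> E \<inter> Y - X" for D
    using measurable_envelopeD1[OF E, of D] that by (auto intro: null_setsI)
  ultimately show ?thesis
    using assms(2) by (intro exI[of _ "E \<inter> Y"]) simp
qed

text \<open>Take measurable envelopes \<open>H s \<subseteq> A s\<close> of \<open>suslin_extending A s\<close>. Where the
  envelopes fail to branch is a null set \<open>Z\<close>, and off \<open>Z\<close> every point of \<open>H []\<close> has a
  witness, so \<open>suslin A\<close> differs from \<open>H [] - Z\<close> by a subset of a null set.\<close>

lemma suslin_in_completion:
  assumes fin: "emeasure M (space M) < \<infinity>" and A: "\<And>s. A s \<in> sets (completion M)"
  shows "suslin A \<in> sets (completion M)"
proof -
  let ?C = "completion M"
  have fin_C: "emeasure ?C (space ?C) < \<infinity>"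
    using fin by simp
  define R where "R = suslin_extending A"
  have "\<forall>s. \<exists>H. H \<in> sets ?C \<and> R s \<subseteq> H \<and> H \<subseteq> A s
      \<and> (\<forall>D\<in>sets ?C. D \<subseteq> H - R s \<longrightarrow> D \<in> null_sets ?C)"
    unfolding R_def by (intro allI measurable_envelope_within[OF fin_C suslin_extending_subset A])
  from choice[OF this] obtain H where H_env: "\<forall>s. H s \<in> sets ?C \<and> R s \<subseteq> H s \<and> H s \<subseteq> A s
      \<and> (\<forall>D\<in>sets ?C. D \<subseteq> H s - R s \<longrightarrow> D \<in> null_sets ?C)"
    ..
  then have H: "\<And>s. H s \<in> sets ?C" "\<And>s. R s \<subseteq> H s" "\<And>s. H s \<subseteq> A s"
    "\<And>s D. D \<in> sets ?C \<Longrightarrow> D \<subseteq> H s - R s \<Longrightarrow> D \<in> null_sets ?C"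
    by simp_all
  define Z where "Z = (\<Union>s. H s - (\<Union>j. H (s @ [j])))"
  have Z: "Z \<in> null_sets ?C"
    unfolding Z_def
  proof (rule null_sets_UN')
    fix s
    have "R s \<subseteq> (\<Union>j. R (s @ [j]))"
      unfolding R_def by (rule suslin_extending_branches)
    then have "R s \<subseteq> (\<Union>j. H (s @ [j]))"
      using H(2) by blast
    moreover have "(\<Union>j. H (s @ [j])) \<in> sets ?C"
      using H(1) by blast
    ultimately show "H s - (\<Union>j. H (s @ [j])) \<in> null_sets ?C"
      using H(1)[of s] by (intro H(4)) auto
  qed simp
  have "H [] - Z \<subseteq> suslin A"
  proof
    fix t assume t: "t \<in> H [] - Z"
    have "\<exists>j. t \<in> H (s @ [j])" if "t \<in> H s" for s
      using t that unfolding Z_def by blast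
    with t H(3) show "t \<in> suslin A"
      by (intro mem_suslin_if_branching[of t H]) auto
  qed
  moreover have "suslin A \<subseteq> R []"
    unfolding R_def by (rule suslin_subset_extending_Nil)
  then have "suslin A \<subseteq> H []"
    using H(2)[of "[]"] by blast
  ultimately have "suslin A = (H [] - Z) \<union> (suslin A \<inter> Z)"
    by blast
  also have "\<dots> \<in> sets ?C"
  proof (intro sets.Un sets.Diff)
    show "suslin A \<inter> Z \<in> sets ?C"
      using null_sets_completion_subset[of "suslin A \<inter> Z" Z M] Z by blast
  qed (use H(1) Z in auto)
  finally show ?thesis .
qed

definition suslin_sets :: "('x set \<Rightarrow> bool) \<Rightarrow> 'x set set" where
  "suslin_sets P = {suslin A | A. \<forall>s. P (A s)}"

lemma suslin_setsI: "(\<And>s. P (A s)) \<Longrightarrow> suslin A \<in> suslin_sets P"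
  unfolding suslin_sets_def by blast

lemma suslin_setsE:
  assumes "X \<in> suslin_sets P"
  obtains A where "X = suslin A" "\<And>s. P (A s)"
  using assms unfolding suslin_sets_def by blast

lemma suslin_sets_seqE:
  assumes "\<And>n::nat. X n \<in> suslin_sets P"
  obtains A where "\<And>n. X n = suslin (A n)" "\<And>n s. P (A n s)"
proof -
  have "\<forall>n. \<exists>A. X n = suslin A \<and> (\<forall>s. P (A s))"
    using assms unfolding suslin_sets_def by blast
  from choice[OF this] obtain A where "\<forall>n. X n = suslin (A n) \<and> (\<forall>s. P (A n s))" ..
  then show ?thesis using that by blast
qed

lemma suslin_sets_subset: "(\<And>X. P X \<Longrightarrow> X \<subseteq> \<Omega>) \<Longrightarrow> E \<in> suslin_sets P \<Longrightarrow> E \<subseteq> \<Omega>"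
  by (metis suslin_setsE suslin_subset)

lemma suslin_sets_base: "P X \<Longrightarrow> X \<in> suslin_sets P"
  using suslin_setsI[of P "\<lambda>s. X"] by simp

lemma suslin_UN_eq:
  assumes "\<And>n s. A n s \<subseteq> \<Omega>"
  shows "suslin (case_list \<Omega> A) = (\<Union>n. suslin (A n))"
proof (intro equalityI subsetI)
  fix t assume "t \<in> suslin (case_list \<Omega> A)"
  then obtain g where g: "\<forall>k. t \<in> case_list \<Omega> A (map g [0..<k])"
    unfolding suslin_def by blast
  have "t \<in> A (g 0) (map (\<lambda>i. g (Suc i)) [0..<k])" for k
    using g[rule_format, of "Suc k"] by (simp only: map_upt_Suc_Cons list.case)
  then show "t \<in> (\<Union>n. suslin (A n))"
    unfolding suslin_def by blast
next
  fix t assume "t \<in> (\<Union>n. suslin (A n))"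
  then obtain n f where f: "\<forall>k. t \<in> A n (map f [0..<k])"
    unfolding suslin_def by blast
  have "t \<in> case_list \<Omega> A (map (case_nat n f) [0..<k])" for k
  proof (cases k)
    case 0
    then show ?thesis using f[rule_format, of 0] assms by auto
  next
    case (Suc k')
    then show ?thesis using f[rule_format, of k'] by (simp only: map_upt_Suc_Cons) simp
  qed
  then show "t \<in> suslin (case_list \<Omega> A)"
    unfolding suslin_def by blast
qed

lemma suslin_sets_UN:
  assumes "P \<Omega>" and "\<And>X. P X \<Longrightarrow> X \<subseteq> \<Omega>" and "\<And>n::nat. X n \<in> suslin_sets P"
  shows "(\<Union>n. X n) \<in> suslin_sets P"
proof -
  obtain A where A: "\<And>n. X n = suslin (A n)" "\<And>n s. P (A n s)"
    using suslin_sets_seqE[of X P] assms(3) by blast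
  have "P (case_list \<Omega> A s)" for s
    using assms(1) A(2) by (cases s) simp_all
  then have "suslin (case_list \<Omega> A) \<in> suslin_sets P"
    by (rule suslin_setsI)
  also have "suslin (case_list \<Omega> A) = (\<Union>n. X n)"
    using suslin_UN_eq[of A \<Omega>] A assms(2) by simp
  finally show ?thesis .
qed

text \<open>A list \<open>s\<close> codes finitely many branches at once: the \<open>n\<close>-th branch reads the
  entries at positions \<open>prod_encode (n, i)\<close>, and only the initial segments coded inside \<open>s\<close> count.\<close>

definition suslin_interleave :: "'x set \<Rightarrow> (nat \<Rightarrow> nat list \<Rightarrow> 'x set) \<Rightarrow> nat list \<Rightarrow> 'x set" where
  "suslin_interleave \<Omega> A s = \<Omega> \<inter> (\<Inter>(n, m) \<in> {(n, m). n < length s \<and> m < length s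
      \<and> (\<forall>i<m. prod_encode (n, i) < length s)}. A n (map (\<lambda>i. s ! prod_encode (n, i)) [0..<m]))"

lemma suslin_interleave_subset: "suslin (suslin_interleave \<Omega> A) \<subseteq> (\<Inter>n. suslin (A n))"
proof (intro subsetI INT_I)
  fix t n assume "t \<in> suslin (suslin_interleave \<Omega> A)"
  then obtain g where g: "\<forall>k. t \<in> suslin_interleave \<Omega> A (map g [0..<k])"
    unfolding suslin_def by blast
  have "t \<in> A n (map (\<lambda>i. g (prod_encode (n, i))) [0..<m])" for m
  proof -
    define L where "L = Suc (n + m + (\<Sum>i<m. prod_encode (n, i)))"
    have code_lt: "prod_encode (n, i) < L" if "i < m" for i
      using that member_le_sum[of i "{..<m}" "\<lambda>i. prod_encode (n, i)"] by (simp add: L_def)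
    have "t \<in> A n (map (\<lambda>i. map g [0..<L] ! prod_encode (n, i)) [0..<m])"
      using g[rule_format, of L] code_lt unfolding suslin_interleave_def by (auto simp: L_def)
    also have "map (\<lambda>i. map g [0..<L] ! prod_encode (n, i)) [0..<m]
        = map (\<lambda>i. g (prod_encode (n, i))) [0..<m]"
      using code_lt by (intro map_cong) auto
    finally show ?thesis .
  qed
  then show "t \<in> suslin (A n)"
    unfolding suslin_def by blast
qed

lemma subset_suslin_interleave:
  assumes "\<And>n s. A n s \<subseteq> \<Omega>"
  shows "(\<Inter>n. suslin (A n)) \<subseteq> suslin (suslin_interleave \<Omega> A)"
proof
  fix t assume "t \<in> (\<Inter>n. suslin (A n))"
  then have "\<forall>n. \<exists>f. \<forall>m. t \<in> A n (map f [0..<m])"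
    by (simp add: suslin_def)
  from choice[OF this] obtain F where F: "\<forall>n m. t \<in> A n (map (F n) [0..<m])" ..
  define g where "g p = F (fst (prod_decode p)) (snd (prod_decode p))" for p
  have "t \<in> \<Omega>"
    using F assms by blast
  moreover have map_eq: "map (\<lambda>i. map g [0..<k] ! prod_encode (n, i)) [0..<m] = map (F n) [0..<m]"
    if "\<forall>i<m. prod_encode (n, i) < k" for n m k
    using that by (intro map_cong) (auto simp: g_def)
  ultimately have "t \<in> suslin_interleave \<Omega> A (map g [0..<k])" for k
    using F unfolding suslin_interleave_def by (auto simp: map_eq)
  then show "t \<in> suslin (suslin_interleave \<Omega> A)"
    unfolding suslin_def by blast
qed

lemma suslin_sets_INT:
  assumes "P \<Omega>" and "\<And>X. P X \<Longrightarrow> X \<subseteq> \<Omega>" and "\<And>X Y. P X \<Longrightarrow> P Y \<Longrightarrow> P (X \<inter> Y)"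
    and "\<And>n::nat. X n \<in> suslin_sets P"
  shows "(\<Inter>n. X n) \<in> suslin_sets P"
proof -
  obtain A where A: "\<And>n. X n = suslin (A n)" "\<And>n s. P (A n s)"
    using suslin_sets_seqE[of X P] assms(4) by blast
  have P_finite_Int: "P (\<Omega> \<inter> \<Inter>(Y ` I))" if "finite I" "\<forall>i\<in>I. P (Y i)" for I Y
    using that
  proof (induct I rule: finite_induct)
    case (insert i I)
    then have "P (Y i \<inter> (\<Omega> \<inter> \<Inter>(Y ` I)))"
      by (simp add: assms(3))
    then show ?case
      by (simp add: Int_left_commute)
  qed (simp add: assms(1))
  have "P (suslin_interleave \<Omega> A s)" for s
  proof -
    have "finite {(n, m). n < length s \<and> m < length s \<and> (\<forall>i<m. prod_encode (n, i) < length s)}"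
      by (rule finite_subset[of _ "{..<length s} \<times> {..<length s}"]) auto
    then show ?thesis
      unfolding suslin_interleave_def using A(2) by (intro P_finite_Int) auto
  qed
  then have "suslin (suslin_interleave \<Omega> A) \<in> suslin_sets P"
    by (rule suslin_setsI)
  also have "suslin (suslin_interleave \<Omega> A) = (\<Inter>n. X n)"
    using suslin_interleave_subset[of \<Omega> A] subset_suslin_interleave[of A \<Omega>] A assms(2)
    by (simp add: subset_antisym)
  finally show ?thesis .
qed

section \<open>Completion-measurable sets in a product with a metric space\<close>

lemma open_eq_Union_closed_seq:
  fixes U :: "'a::metric_space set"
  assumes "open U"
  obtains F :: "nat \<Rightarrow> 'a set" where "\<And>n. closed (F n)" "U = (\<Union>n. F n)"
proof -
  have "fsigma_in euclidean U"
    using assms by (intro open_imp_fsigma_in) (simp_all add: metrizable_space_euclidean)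
  then show ?thesis
    using that unfolding fsigma_in_ascending by auto
qed

definition closed_rectangle :: "'a measure \<Rightarrow> ('a \<times> 'b::topological_space) set \<Rightarrow> bool" where
  "closed_rectangle M X \<longleftrightarrow> (\<exists>a F. X = a \<times> F \<and> a \<in> sets (completion M) \<and> closed F)"

abbreviation suslin_rectangles :: "'a measure \<Rightarrow> ('a \<times> 'b::topological_space) set set" where
  "suslin_rectangles M \<equiv> suslin_sets (closed_rectangle M)"

lemma closed_rectangleI: "a \<in> sets (completion M) \<Longrightarrow> closed F \<Longrightarrow> closed_rectangle M (a \<times> F)"
  unfolding closed_rectangle_def by blast

lemma closed_rectangle_top: "closed_rectangle M (space M \<times> UNIV)"
  using closed_rectangleI[of "space M" M UNIV] by simp

lemma closed_rectangle_subset: "closed_rectangle M X \<Longrightarrow> X \<subseteq> space M \<times> UNIV"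
  unfolding closed_rectangle_def using sets.sets_into_space[of _ "completion M"] by fastforce

lemma closed_rectangle_Int:
  assumes "closed_rectangle M X" "closed_rectangle M Y"
  shows "closed_rectangle M (X \<inter> Y)"
proof -
  obtain a F b G where "X = a \<times> F" "a \<in> sets (completion M)" "closed F"
    and "Y = b \<times> G" "b \<in> sets (completion M)" "closed G"
    using assms unfolding closed_rectangle_def by blast
  moreover have "a \<times> F \<inter> b \<times> G = (a \<inter> b) \<times> (F \<inter> G)"
    by auto
  ultimately show ?thesis
    by (simp add: closed_rectangleI sets.Int closed_Int)
qed

lemma suslin_rectangles_base: "closed_rectangle M X \<Longrightarrow> X \<in> suslin_rectangles M"
  by (rule suslin_sets_base)

lemma suslin_rectangles_UN: "(\<And>n::nat. X n \<in> suslin_rectangles M) \<Longrightarrow> (\<Union>n. X n) \<in> suslin_rectangles M"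
  by (rule suslin_sets_UN[where P="closed_rectangle M" and \<Omega>="space M \<times> UNIV",
        OF closed_rectangle_top closed_rectangle_subset])

lemma suslin_rectangles_INT: "(\<And>n::nat. X n \<in> suslin_rectangles M) \<Longrightarrow> (\<Inter>n. X n) \<in> suslin_rectangles M"
  by (rule suslin_sets_INT[where P="closed_rectangle M" and \<Omega>="space M \<times> UNIV",
        OF closed_rectangle_top closed_rectangle_subset closed_rectangle_Int])

lemma suslin_rectangles_Un:
  assumes "X \<in> suslin_rectangles M" "Y \<in> suslin_rectangles M"
  shows "X \<union> Y \<in> suslin_rectangles M"
proof -
  have "(\<Union>n::nat. if n = 0 then X else Y) \<in> suslin_rectangles M"
    using assms by (intro suslin_rectangles_UN) simp
  moreover have "(\<Union>n::nat. if n = 0 then X else Y) = X \<union> Y"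
    by (auto split: if_splits)
  ultimately show ?thesis by simp
qed

lemma suslin_rectangles_Int:
  assumes "X \<in> suslin_rectangles M" "Y \<in> suslin_rectangles M"
  shows "X \<inter> Y \<in> suslin_rectangles M"
proof -
  have "(\<Inter>n::nat. if n = 0 then X else Y) \<in> suslin_rectangles M"
    using assms by (intro suslin_rectangles_INT) simp
  moreover have "(\<Inter>n::nat. if n = 0 then X else Y) = X \<inter> Y"
    by (auto split: if_splits)
  ultimately show ?thesis by simp
qed

lemma suslin_rectangles_subset: "X \<in> suslin_rectangles M \<Longrightarrow> X \<subseteq> space M \<times> UNIV"
  by (rule suslin_sets_subset[OF closed_rectangle_subset])

text \<open>The sets that are Suslin over closed rectangles together with their complement form a
  \<open>\<sigma>\<close>-algebra containing the measurable rectangles.\<close>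

definition bisuslin :: "'a measure \<Rightarrow> ('a \<times> 'b::topological_space) set \<Rightarrow> bool" where
  "bisuslin M E \<longleftrightarrow> E \<in> suslin_rectangles M \<and> (space M \<times> UNIV) - E \<in> suslin_rectangles M"

lemma bisuslin_Int: "bisuslin M X \<Longrightarrow> bisuslin M Y \<Longrightarrow> bisuslin M (X \<inter> Y)"
  unfolding bisuslin_def Diff_Int by (simp add: suslin_rectangles_Int suslin_rectangles_Un)

lemma bisuslin_UN:
  assumes "\<And>n::nat. bisuslin M (X n)"
  shows "bisuslin M (\<Union>n. X n)"
proof -
  have "(space M \<times> UNIV) - (\<Union>n. X n) = (\<Inter>n. (space M \<times> UNIV) - X n)"
    by blast
  then show ?thesis
    using assms unfolding bisuslin_def
    by (metis suslin_rectangles_UN suslin_rectangles_INT)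
qed

lemma bisuslin_compl:
  assumes "bisuslin M X"
  shows "bisuslin M ((space M \<times> UNIV) - X)"
proof -
  have "(space M \<times> UNIV) - ((space M \<times> UNIV) - X) = X"
    using assms suslin_rectangles_subset unfolding bisuslin_def by blast
  then show ?thesis
    using assms unfolding bisuslin_def by simp
qed

lemma bisuslin_empty: "bisuslin M {}"
proof -
  have "closed_rectangle M ({} \<times> (UNIV :: 'b::topological_space set))"
    by (rule closed_rectangleI) simp_all
  then show "bisuslin M ({} :: ('a \<times> 'b) set)"
    unfolding bisuslin_def using suslin_rectangles_base[OF closed_rectangle_top]
    by (simp add: suslin_rectangles_base)
qed

lemma bisuslin_completion_times_UNIV:
  assumes "a \<in> sets (completion M)"
  shows "bisuslin M (a \<times> UNIV)"
proof -
  have "(space M \<times> UNIV) - a \<times> UNIV = (space M - a) \<times> UNIV"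
    by blast
  moreover have "space M - a \<in> sets (completion M)"
    using assms by (metis sets.compl_sets space_completion)
  ultimately show ?thesis
    unfolding bisuslin_def using assms by (metis suslin_rectangles_base closed_rectangleI closed_UNIV)
qed

lemma bisuslin_space_times_borel:
  fixes b :: "'b::metric_space set"
  assumes "b \<in> sets borel"
  shows "bisuslin M (space M \<times> b)"
proof -
  have "b \<in> sigma_sets UNIV (Collect closed)"
    using assms by (simp add: borel_eq_closed)
  then show ?thesis
  proof induct
    case (Basic F)
    then have "closed F"
      by simp
    then obtain G :: "nat \<Rightarrow> 'b set" where G: "\<And>n. closed (G n)" "-F = (\<Union>n. G n)"
      using open_eq_Union_closed_seq[of "-F"] by (auto simp: open_Compl)
    have "(space M \<times> UNIV) - space M \<times> F = (\<Union>n. space M \<times> G n)"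
      using G(2) by blast
    moreover have "(\<Union>n. space M \<times> G n) \<in> suslin_rectangles M"
      using G(1) by (intro suslin_rectangles_UN suslin_rectangles_base closed_rectangleI) auto
    ultimately show ?case
      unfolding bisuslin_def using \<open>closed F\<close>
      by (simp add: suslin_rectangles_base closed_rectangleI)
  next
    case (Compl b)
    have "space M \<times> (UNIV - b) = (space M \<times> UNIV) - space M \<times> b"
      by blast
    then show ?case
      using bisuslin_compl[OF Compl(2)] by simp
  next
    case (Union B)
    have "space M \<times> \<Union>(range B) = (\<Union>n. space M \<times> B n)"
      by blast
    then show ?case
      using bisuslin_UN[OF Union(2)] by simp
  qed (simp add: bisuslin_empty)
qed

lemma bisuslin_if_sets_completion_borel:
  assumes "E \<in> sets (completion M \<Otimes>\<^sub>M (borel :: 'b::metric_space measure))"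
  shows "bisuslin M E"
proof -
  have "E \<in> sigma_sets (space M \<times> UNIV)
      {a \<times> b | a b. a \<in> sets (completion M) \<and> b \<in> sets (borel :: 'b measure)}"
    using assms by (simp add: sets_pair_measure)
  then show ?thesis
  proof induct
    case (Basic X)
    then obtain a b where X: "X = a \<times> b" "a \<in> sets (completion M)" "b \<in> sets (borel :: 'b measure)"
      by blast
    have "X = (a \<times> UNIV) \<inter> (space M \<times> b)"
      using X(1) sets.sets_into_space[OF X(2)] by auto
    then show ?case
      using bisuslin_Int bisuslin_completion_times_UNIV[OF X(2)] bisuslin_space_times_borel[OF X(3)]
      by metis
  next
    case (Compl X)
    show ?case using Compl(2) by (rule bisuslin_compl)
  next
    case (Union X)
    then show ?case by (intro bisuslin_UN)
  qed (rule bisuslin_empty)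
qed

section \<open>Measurable projection\<close>

lemma dense_sequence_exists:
  obtains q :: "nat \<Rightarrow> 'b::{metric_space, second_countable_topology}"
  where "\<And>x e. e > 0 \<Longrightarrow> \<exists>j. dist (q j) x < e"
proof -
  obtain D :: "'b set" where D: "countable D" "\<And>X. open X \<Longrightarrow> X \<noteq> {} \<Longrightarrow> \<exists>d\<in>D. d \<in> X"
    using countable_dense_exists by blast
  have "\<exists>j. dist (from_nat_into D j) x < e" if e: "e > 0" for x e
  proof -
    obtain d where "d \<in> D" "d \<in> ball x e"
      using D(2)[of "ball x e"] e by auto
    moreover obtain j where "from_nat_into D j = d"
      using from_nat_into_surj[OF D(1) \<open>d \<in> D\<close>] by blast
    ultimately show ?thesis
      by (auto simp: dist_commute)
  qed
  then show ?thesis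
    using that by blast
qed

text \<open>To project a Suslin set \<open>suslin (\<lambda>s. a s \<times> F s)\<close> we let every entry of a code
  \<open>s\<close> carry, via \<open>prod_decode\<close>, a digit of a branch together with the index of a point
  \<open>q j\<close> of a dense sequence; the \<open>i\<close>-th entry confines the second coordinate to a ball of
  radius \<open>2\<^sup>-\<^sup>i\<close>, so along every branch the admissible second coordinates shrink to a
  point by completeness.\<close>

definition code_branch :: "nat list \<Rightarrow> nat list" where
  "code_branch s = map (\<lambda>c. fst (prod_decode c)) s"

definition code_nest :: "(nat list \<Rightarrow> 'b::metric_space set) \<Rightarrow> (nat \<Rightarrow> 'b) \<Rightarrow> nat list \<Rightarrow> 'b set" where
  "code_nest F q s = (\<Inter>k\<in>{..length s}. F (take k (code_branch s)))
     \<inter> (\<Inter>i\<in>{..<length s}. cball (q (snd (prod_decode (s ! i)))) ((1/2) ^ i))"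

definition projection_scheme ::
    "(nat list \<Rightarrow> 'a set) \<Rightarrow> (nat list \<Rightarrow> 'b::metric_space set) \<Rightarrow> (nat \<Rightarrow> 'b) \<Rightarrow> nat list \<Rightarrow> 'a set" where
  "projection_scheme a F q s = (if code_nest F q s = {} then {} else a (code_branch s))"

lemma code_branch_map: "code_branch (map g [0..<L]) = map (\<lambda>i. fst (prod_decode (g i))) [0..<L]"
  by (simp add: code_branch_def)

lemma code_nest_map:
  "code_nest F q (map g [0..<L]) = (\<Inter>k\<in>{..L}. F (map (\<lambda>i. fst (prod_decode (g i))) [0..<k]))
     \<inter> (\<Inter>i\<in>{..<L}. cball (q (snd (prod_decode (g i)))) ((1/2) ^ i))"
proof -
  have "take k (code_branch (map g [0..<L])) = map (\<lambda>i. fst (prod_decode (g i))) [0..<k]"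
    if "k \<le> L" for k
    using that by (simp add: code_branch_map take_map)
  then show ?thesis
    unfolding code_nest_def by (intro arg_cong2[where f="(\<inter>)"] INF_cong) auto
qed

lemma halving_cball_nest_small:
  fixes c :: "nat \<Rightarrow> 'b::metric_space"
  assumes "\<And>n. S (Suc n) \<subseteq> cball (c n) ((1/2) ^ n)" and "e > 0"
  shows "\<exists>n. \<forall>x\<in>S n. \<forall>y\<in>S n. dist x y < e"
proof -
  obtain i where i: "(1/2::real) ^ i < e/2"
    using real_arch_pow_inv[of "e/2" "1/2"] assms(2) by auto
  have "dist x y < e" if "x \<in> S (Suc i)" "y \<in> S (Suc i)" for x y
  proof -
    have "dist (c i) x \<le> (1/2) ^ i" "dist (c i) y \<le> (1/2) ^ i"
      using that assms(1)[of i] by auto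
    then have "dist x y \<le> 2 * (1/2) ^ i"
      using dist_triangle[of x y "c i"] by (simp add: dist_commute)
    then show ?thesis
      using i by simp
  qed
  then show ?thesis
    by blast
qed

lemma suslin_projection_scheme_subset:
  fixes F :: "nat list \<Rightarrow> 'b::complete_space set"
  assumes "\<And>s. closed (F s)"
  shows "suslin (projection_scheme a F q) \<subseteq> fst ` suslin (\<lambda>s. a s \<times> F s)"
proof
  fix t assume "t \<in> suslin (projection_scheme a F q)"
  then obtain g where g: "\<And>L. t \<in> projection_scheme a F q (map g [0..<L])"
    unfolding suslin_def by blast
  define f where "f i = fst (prod_decode (g i))" for i
  define c where "c i = q (snd (prod_decode (g i)))" for i
  define S where "S L = code_nest F q (map g [0..<L])" for L
  have S_eq: "S L = (\<Inter>k\<in>{..L}. F (map f [0..<k])) \<inter> (\<Inter>i\<in>{..<L}. cball (c i) ((1/2) ^ i))" for L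
    unfolding S_def code_nest_map f_def c_def ..
  have S_ne: "S L \<noteq> {}" and t_a: "t \<in> a (map f [0..<L])" for L
    using g[of L] unfolding projection_scheme_def S_def code_branch_map f_def
    by (auto split: if_splits)
  have "closed (S L)" for L
    unfolding S_eq using assms by (intro closed_Int closed_INT) auto
  moreover have "S n \<subseteq> S m" if "m \<le> n" for m n
    unfolding S_eq using that by auto
  moreover have "\<exists>n. \<forall>x\<in>S n. \<forall>y\<in>S n. dist x y < e" if "e > 0" for e
    using \<open>e > 0\<close> by (intro halving_cball_nest_small[of S c]) (auto simp: S_eq)
  ultimately obtain x where x: "\<And>n. x \<in> S n"
    using decreasing_closed_nest[of S] S_ne by blast
  have "(t, x) \<in> a (map f [0..<k]) \<times> F (map f [0..<k])" for k
    using t_a x[of k] unfolding S_eq by auto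
  then have "(t, x) \<in> suslin (\<lambda>s. a s \<times> F s)"
    unfolding suslin_def by blast
  then show "t \<in> fst ` suslin (\<lambda>s. a s \<times> F s)"
    by force
qed

lemma fst_suslin_subset_projection_scheme:
  assumes q: "\<And>x e. e > 0 \<Longrightarrow> \<exists>j. dist (q j) x < e"
  shows "fst ` suslin (\<lambda>s. a s \<times> F s) \<subseteq> suslin (projection_scheme a F q)"
proof
  fix t assume "t \<in> fst ` suslin (\<lambda>s. a s \<times> F s)"
  then obtain x f where f: "\<And>k. (t, x) \<in> a (map f [0..<k]) \<times> F (map f [0..<k])"
    unfolding suslin_def by force
  have "\<forall>i. \<exists>j. dist (q j) x < (1/2::real) ^ i"
    using q by simp
  from choice[OF this] obtain J where J: "\<forall>i. dist (q (J i)) x < (1/2::real) ^ i" ..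
  define g where "g i = prod_encode (f i, J i)" for i
  have "x \<in> code_nest F q (map g [0..<L])" for L
    using f J unfolding code_nest_map g_def by (auto simp: less_imp_le)
  moreover have "code_branch (map g [0..<L]) = map f [0..<L]" for L
    by (simp add: code_branch_map g_def)
  ultimately have "t \<in> projection_scheme a F q (map g [0..<L])" for L
    using f unfolding projection_scheme_def by auto
  then show "t \<in> suslin (projection_scheme a F q)"
    unfolding suslin_def by blast
qed

lemma fst_suslin_rectangles:
  fixes E :: "('a \<times> 'b::polish_space) set"
  assumes "finite_measure M" and "E \<in> suslin_rectangles M"
  shows "fst ` E \<in> sets (completion M)"
proof -
  let ?C = "completion M"
  obtain X where X: "E = suslin X" "\<And>s. closed_rectangle M (X s)"
    using assms(2) by (blast elim: suslin_setsE)
  have "\<forall>s. \<exists>p. X s = fst p \<times> snd p \<and> fst p \<in> sets ?C \<and> closed (snd p)"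
    using X(2) unfolding closed_rectangle_def by fastforce
  from choice[OF this] obtain p
    where p: "\<forall>s. X s = fst (p s) \<times> snd (p s) \<and> fst (p s) \<in> sets ?C \<and> closed (snd (p s))" ..
  define a where "a s = fst (p s)" for s
  define F where "F s = snd (p s)" for s
  have E: "E = suslin (\<lambda>s. a s \<times> F s)"
  proof -
    have "X = (\<lambda>s. a s \<times> F s)"
      using p unfolding a_def F_def by auto
    then show ?thesis
      using X(1) by simp
  qed
  obtain q :: "nat \<Rightarrow> 'b" where q: "\<And>x e. e > 0 \<Longrightarrow> \<exists>j. dist (q j) x < e"
    using dense_sequence_exists by blast
  have "closed (F s)" for s
    using p unfolding F_def by simp
  then have "fst ` E = suslin (projection_scheme a F q)"
    unfolding E using fst_suslin_subset_projection_scheme[OF q]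
    by (intro subset_antisym suslin_projection_scheme_subset)
  moreover have "projection_scheme a F q s \<in> sets ?C" for s
    using p unfolding projection_scheme_def a_def by simp
  moreover have "emeasure M (space M) < \<infinity>"
    using finite_measure.emeasure_finite[OF assms(1)] by (simp add: top.not_eq_extremum)
  ultimately show ?thesis
    by (simp add: suslin_in_completion)
qed

theorem measurable_projection:
  fixes E :: "('a \<times> 'b::polish_space) set"
  assumes "finite_measure M" and "E \<in> sets (completion M \<Otimes>\<^sub>M borel)"
  shows "fst ` E \<in> sets (completion M)"
  using fst_suslin_rectangles[OF assms(1)] bisuslin_if_sets_completion_borel[OF assms(2)]
  unfolding bisuslin_def by blast

section \<open>Selecting one point from every finite section\<close>

lemma separating_open_sequence:
  obtains U :: "nat \<Rightarrow> 'b::{second_countable_topology, t1_space} set"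
  where "\<And>n. open (U n)" "\<And>x y. x \<noteq> y \<Longrightarrow> \<exists>n. x \<in> U n \<and> y \<notin> U n"
proof -
  obtain B :: "'b set set" where B: "countable B" "topological_basis B"
    using ex_countable_basis by blast
  have "B \<noteq> {}"
    using topological_basisE[OF B(2) open_UNIV] by blast
  then have "open (from_nat_into B n)" for n
    using from_nat_into topological_basis_open[OF B(2)] by blast
  moreover have "\<exists>n. x \<in> from_nat_into B n \<and> y \<notin> from_nat_into B n" if "x \<noteq> y" for x y
  proof -
    obtain V where V: "V \<in> B" "x \<in> V" "V \<subseteq> - {y}"
      using topological_basisE[OF B(2), of "- {y}" x] \<open>x \<noteq> y\<close> by (auto simp: open_Compl)
    moreover obtain n where "from_nat_into B n = V"
      using from_nat_into_surj[OF B(1) V(1)] by blast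
    ultimately show ?thesis
      by blast
  qed
  ultimately show ?thesis
    using that by blast
qed

primrec refine :: "(nat \<Rightarrow> 'b set) \<Rightarrow> ('a \<times> 'b) set \<Rightarrow> nat \<Rightarrow> ('a \<times> 'b) set" where
  "refine U G 0 = G"
| "refine U G (Suc n) =
    {z \<in> refine U G n. snd z \<in> U n \<or> fst z \<notin> fst ` (refine U G n \<inter> (UNIV \<times> U n))}"

definition select :: "(nat \<Rightarrow> 'b set) \<Rightarrow> ('a \<times> 'b) set \<Rightarrow> ('a \<times> 'b) set" where
  "select U G = (\<Inter>n. refine U G n)"

lemma Pair_vimage_refine_Suc:
  "Pair t -` refine U G (Suc n) =
    (if Pair t -` refine U G n \<inter> U n = {} then Pair t -` refine U G n else Pair t -` refine U G n \<inter> U n)"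
proof -
  have "t \<in> fst ` (refine U G n \<inter> UNIV \<times> U n) \<longleftrightarrow> Pair t -` refine U G n \<inter> U n \<noteq> {}"
    by force
  then show ?thesis
    by auto
qed

lemma refine_decreasing: "m \<le> n \<Longrightarrow> refine U G n \<subseteq> refine U G m"
  by (induct rule: dec_induct) auto

lemma select_subset: "select U G \<subseteq> G"
  unfolding select_def by (metis INT_lower UNIV_I refine.simps(1))

lemma refine_in_sets:
  fixes G :: "('a \<times> 'b::polish_space) set"
  assumes fm: "finite_measure M" and G: "G \<in> sets (completion M \<Otimes>\<^sub>M borel)"
    and U: "\<And>n. open (U n)"
  shows "refine U G n \<in> sets (completion M \<Otimes>\<^sub>M borel)"
proof (induct n)
  case (Suc n)
  let ?W = "refine U G n"
  have W_space: "?W \<subseteq> space M \<times> UNIV"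
    using sets.sets_into_space[OF Suc] by (simp add: space_pair_measure)
  have rect: "space M \<times> U n \<in> sets (completion M \<Otimes>\<^sub>M borel)"
    using U[of n] by (intro pair_measureI) auto
  define P where "P = fst ` (?W \<inter> (space M \<times> U n))"
  have "P \<in> sets (completion M)"
    unfolding P_def using Suc rect by (intro measurable_projection[OF fm] sets.Int)
  then have co_P: "(space M - P) \<times> UNIV \<in> sets (completion M \<Otimes>\<^sub>M borel)"
    by (intro pair_measureI) auto
  have "?W \<inter> (UNIV \<times> U n) = ?W \<inter> (space M \<times> U n)"
    using W_space by blast
  then have "refine U G (Suc n) = {z \<in> ?W. snd z \<in> U n \<or> fst z \<notin> P}"
    by (simp add: P_def)
  also have "\<dots> = ?W \<inter> ((space M \<times> U n) \<union> ((space M - P) \<times> UNIV))"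
    using W_space by auto
  finally show ?case
    using Suc rect co_P by (metis sets.Int sets.Un)
qed (simp add: G)

lemma select_in_sets:
  fixes G :: "('a \<times> 'b::polish_space) set"
  assumes "finite_measure M" and "G \<in> sets (completion M \<Otimes>\<^sub>M borel)" and "\<And>n. open (U n)"
  shows "select U G \<in> sets (completion M \<Otimes>\<^sub>M borel)"
  unfolding select_def using refine_in_sets[OF assms] by (intro sets.countable_INT) auto

lemma INT_decreasing_finite_nonempty:
  fixes S :: "nat \<Rightarrow> 'a set"
  assumes "finite (S 0)" and "\<And>n. S n \<noteq> {}" and "\<And>m n. m \<le> n \<Longrightarrow> S n \<subseteq> S m"
  shows "(\<Inter>n. S n) \<noteq> {}"
proof
  assume "(\<Inter>n. S n) = {}"
  then have "\<forall>x\<in>S 0. \<exists>n. x \<notin> S n"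
    by blast
  then obtain N :: "_ \<Rightarrow> nat" where N: "\<And>x. x \<in> S 0 \<Longrightarrow> x \<notin> S (N x)"
    by metis
  define K where "K = (\<Sum>x\<in>S 0. N x)"
  obtain y where y: "y \<in> S K"
    using assms(2) by blast
  then have "y \<in> S 0"
    using assms(3)[of 0 K] by blast
  then have "N y \<le> K"
    unfolding K_def using assms(1) by (intro member_le_sum) auto
  then show False
    using N[OF \<open>y \<in> S 0\<close>] assms(3) y by blast
qed

lemma Pair_vimage_select:
  assumes "finite (Pair t -` G)" and "Pair t -` G \<noteq> {}"
    and sep: "\<And>x y. x \<noteq> y \<Longrightarrow> \<exists>n. x \<in> U n \<and> y \<notin> U n"
  obtains x where "Pair t -` select U G = {x}"
proof -
  define S where "S n = Pair t -` refine U G n" for n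
  have select_eq: "Pair t -` select U G = (\<Inter>n. S n)"
    unfolding S_def select_def by auto
  have S_Suc: "S (Suc n) = (if S n \<inter> U n = {} then S n else S n \<inter> U n)" for n
    unfolding S_def by (rule Pair_vimage_refine_Suc)
  have "S n \<noteq> {}" for n
    using assms(2) S_Suc by (induct n) (auto simp: S_def)
  moreover have "S n \<subseteq> S m" if "m \<le> n" for m n
    unfolding S_def using refine_decreasing[OF that] by blast
  ultimately obtain x where x: "x \<in> (\<Inter>n. S n)"
    using INT_decreasing_finite_nonempty[of S] assms(1) by (auto simp: S_def)
  have "y = x" if "y \<in> (\<Inter>n. S n)" for y
  proof (rule ccontr)
    assume "y \<noteq> x"
    then obtain n where "y \<in> U n" "x \<notin> U n"
      using sep by blast
    then show False
      using x that S_Suc[of n] by (auto split: if_splits)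
  qed
  then have "Pair t -` select U G = {x}"
    using x unfolding select_eq by blast
  then show ?thesis ..
qed

primrec unselected :: "(nat \<Rightarrow> 'b set) \<Rightarrow> ('a \<times> 'b) set \<Rightarrow> nat \<Rightarrow> ('a \<times> 'b) set" where
  "unselected U G 0 = G"
| "unselected U G (Suc i) = unselected U G i - select U (unselected U G i)"

lemma unselected_in_sets:
  fixes G :: "('a \<times> 'b::polish_space) set"
  assumes "finite_measure M" and "G \<in> sets (completion M \<Otimes>\<^sub>M borel)" and "\<And>n. open (U n)"
  shows "unselected U G i \<in> sets (completion M \<Otimes>\<^sub>M borel)"
  by (induct i) (simp_all add: assms select_in_sets sets.Diff)

lemma unselected_decreasing: "m \<le> n \<Longrightarrow> unselected U G n \<subseteq> unselected U G m"
  by (induct rule: dec_induct) auto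

lemma card_Pair_vimage_unselected:
  assumes "finite (Pair t -` G)" and sep: "\<And>x y. x \<noteq> y \<Longrightarrow> \<exists>n. x \<in> U n \<and> y \<notin> U n"
  shows "finite (Pair t -` unselected U G i) \<and> card (Pair t -` unselected U G i) \<le> card (Pair t -` G) - i"
proof (induct i)
  case (Suc i)
  let ?S = "Pair t -` unselected U G i"
  show ?case
  proof (cases "?S = {}")
    case False
    then obtain x where x: "Pair t -` select U (unselected U G i) = {x}"
      using Pair_vimage_select[OF _ False sep] Suc by blast
    then have "x \<in> ?S"
      using select_subset[of U "unselected U G i"] by blast
    moreover have "Pair t -` unselected U G (Suc i) = ?S - {x}"
      using x by auto
    ultimately show ?thesis
      using Suc by (simp add: card_Diff_singleton) arith
  qed (simp add: vimage_Diff)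
qed (simp add: assms(1))

lemma single_valued_select:
  assumes "\<And>t. finite (Pair t -` G)" and sep: "\<And>x y. x \<noteq> y \<Longrightarrow> \<exists>n. x \<in> U n \<and> y \<notin> U n"
  shows "single_valued (select U G)"
proof (rule single_valuedI)
  fix t x y assume xy: "(t, x) \<in> select U G" "(t, y) \<in> select U G"
  then have "Pair t -` G \<noteq> {}"
    using select_subset by blast
  then obtain z where "Pair t -` select U G = {z}"
    using Pair_vimage_select[OF assms(1) _ sep] by blast
  then have "x = z" "y = z"
    using xy by auto
  then show "x = y"
    by simp
qed

lemma select_unselected_disjoint:
  assumes "i \<noteq> j"
  shows "select U (unselected U G i) \<inter> select U (unselected U G j) = {}"
proof -
  have "select U (unselected U G j) \<subseteq> unselected U G (Suc i)" if "i < j" for i j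
    using select_subset[of U "unselected U G j"] unselected_decreasing[of "Suc i" j U G] that by simp
  then show ?thesis
    using assms by (cases "i < j") (auto simp: not_less_iff_gr_or_eq)
qed

lemma Un_select_unselected: "G = (\<Union>i<n. select U (unselected U G i)) \<union> unselected U G n"
proof (induct n)
  case (Suc n)
  then show ?case
    using select_subset[of U "unselected U G n"] by (auto simp: lessThan_Suc)
qed simp

lemma unselected_eq_empty:
  assumes "\<And>t. finite (Pair t -` G)" and "\<And>t. card (Pair t -` G) \<le> N"
    and sep: "\<And>x y. x \<noteq> y \<Longrightarrow> \<exists>n. x \<in> U n \<and> y \<notin> U n"
  shows "unselected U G N = {}"
proof (rule equals0I)
  fix z assume z: "z \<in> unselected U G N"
  have "finite (Pair (fst z) -` unselected U G N)" "card (Pair (fst z) -` unselected U G N) = 0"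
    using card_Pair_vimage_unselected[OF assms(1) sep, of "fst z" N] assms(2)[of "fst z"] by auto
  then show False
    using z by (cases z) auto
qed

lemma finite_section_graph_decomposition:
  fixes G :: "('a \<times> 'b::polish_space) set"
  assumes fm: "finite_measure M" and G: "G \<in> sets (completion M \<Otimes>\<^sub>M borel)"
    and fin: "\<And>t. finite (Pair t -` G)" and card: "\<And>t. card (Pair t -` G) \<le> N"
  obtains H where "\<And>i. H i \<in> sets (completion M \<Otimes>\<^sub>M borel)" "\<And>i. single_valued (H i)"
    "disjoint_family H" "G = (\<Union>i<N. H i)"
proof -
  obtain U :: "nat \<Rightarrow> 'b set"
    where U: "\<And>n. open (U n)" and sep: "\<And>x y. x \<noteq> y \<Longrightarrow> \<exists>n. x \<in> U n \<and> y \<notin> U n"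
    using separating_open_sequence by blast
  show ?thesis
  proof (rule that)
    show "select U (unselected U G i) \<in> sets (completion M \<Otimes>\<^sub>M borel)" for i
      using fm unselected_in_sets[OF fm G U] U by (rule select_in_sets)
    show "single_valued (select U (unselected U G i))" for i
      using card_Pair_vimage_unselected[OF fin sep] sep by (intro single_valued_select) blast+
    show "disjoint_family (\<lambda>i. select U (unselected U G i))"
      unfolding disjoint_family_on_def using select_unselected_disjoint by blast
    show "G = (\<Union>i<N. select U (unselected U G i))"
      using Un_select_unselected[of G U N] unselected_eq_empty[OF fin card sep] by simp
  qed
qed

lemma single_valued_the_mem:
  assumes "single_valued H" and "(t, x) \<in> H"
  shows "(THE x. (t, x) \<in> H) = x"
  using assms by (auto dest: single_valuedD)

lemma single_valued_graph_measurable: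
  fixes H :: "('a \<times> 'b::polish_space) set"
  assumes fm: "finite_measure M" and H: "H \<in> sets (completion M \<Otimes>\<^sub>M borel)"
    and sv: "single_valued H"
  shows "fst ` H \<in> sets (completion M)"
    and "(\<lambda>t. THE x. (t, x) \<in> H) \<in> measurable (restrict_space (completion M) (fst ` H)) borel"
proof -
  let ?C = "completion M"
  show dom: "fst ` H \<in> sets ?C"
    by (rule measurable_projection[OF fm H])
  have dom_space: "fst ` H \<inter> space ?C = fst ` H"
    using sets.sets_into_space[OF dom] by blast
  show "(\<lambda>t. THE x. (t, x) \<in> H) \<in> measurable (restrict_space ?C (fst ` H)) borel"
  proof (rule measurableI)
    fix B :: "'b set" assume B: "B \<in> sets borel"
    have "(\<lambda>t. THE x. (t, x) \<in> H) -` B \<inter> space (restrict_space ?C (fst ` H)) = fst ` (H \<inter> (space M \<times> B))"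
      using dom_space single_valued_the_mem[OF sv] sets.sets_into_space[OF H]
      by (force simp: space_restrict_space space_pair_measure)
    moreover have "H \<inter> (space M \<times> B) \<in> sets (?C \<Otimes>\<^sub>M borel)"
      using H B by (intro sets.Int pair_measureI) auto
    then have "fst ` (H \<inter> (space M \<times> B)) \<in> sets ?C"
      by (rule measurable_projection[OF fm])
    ultimately show "(\<lambda>t. THE x. (t, x) \<in> H) -` B \<inter> space (restrict_space ?C (fst ` H))
        \<in> sets (restrict_space ?C (fst ` H))"
      using dom_space by (simp add: sets_restrict_space_iff dom) blast
  qed simp
qed

lemma Pair_vimage_UN_single_valued:
  assumes "\<And>i. i \<in> I \<Longrightarrow> single_valued (H i)"
  shows "Pair t -` (\<Union>i\<in>I. H i) = {(THE x. (t, x) \<in> H i) | i. i \<in> I \<and> t \<in> fst ` H i}"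
  using single_valued_the_mem[OF assms] by force

lemma the_neq_if_disjoint_single_valued:
  assumes "single_valued H" "single_valued K" "H \<inter> K = {}" "t \<in> fst ` H" "t \<in> fst ` K"
  shows "(THE x. (t, x) \<in> H) \<noteq> (THE x. (t, x) \<in> K)"
  using assms single_valued_the_mem[OF assms(1)] single_valued_the_mem[OF assms(2)] by force

lemma finite_section_selectors_completion:
  fixes G :: "('a \<times> 'b::polish_space) set"
  assumes fm: "finite_measure M" and G: "G \<in> sets (completion M \<Otimes>\<^sub>M borel)"
    and "\<And>t. finite (Pair t -` G)" and "\<And>t. card (Pair t -` G) \<le> N"
  obtains T :: "nat \<Rightarrow> 'a set" and s :: "nat \<Rightarrow> 'a \<Rightarrow> 'b"
  where "\<And>i. i \<in> {1..N} \<Longrightarrow> T i \<in> sets (completion M)"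
    "\<And>i. i \<in> {1..N} \<Longrightarrow> s i \<in> measurable (restrict_space (completion M) (T i)) borel"
    "\<And>t. Pair t -` G = {s i t | i. i \<in> {1..N} \<and> t \<in> T i}"
    "\<And>i j t. i \<in> {1..N} \<Longrightarrow> j \<in> {1..N} \<Longrightarrow> i \<noteq> j \<Longrightarrow> t \<in> T i \<inter> T j \<Longrightarrow> s i t \<noteq> s j t"
proof -
  obtain H where H: "\<And>i. H i \<in> sets (completion M \<Otimes>\<^sub>M borel)" "\<And>i. single_valued (H i)"
    "disjoint_family H" and G_eq: "G = (\<Union>i<N. H i)"
    using finite_section_graph_decomposition[OF fm G assms(3,4)] by blast
  define T where "T i = fst ` H (i - 1)" for i
  define s where "s i t = (THE x. (t, x) \<in> H (i - 1))" for i t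
  show ?thesis
  proof (rule that)
    show "T i \<in> sets (completion M)" "s i \<in> measurable (restrict_space (completion M) (T i)) borel" for i
      unfolding T_def s_def using single_valued_graph_measurable[OF fm H(1,2)] by blast+
    have "{1..N} = Suc ` {..<N}"
      by (simp add: image_Suc_lessThan)
    then have "G = (\<Union>i\<in>{1..N}. H (i - 1))"
      unfolding G_eq by simp
    then show "Pair t -` G = {s i t | i. i \<in> {1..N} \<and> t \<in> T i}" for t
      unfolding T_def s_def using H(2) by (simp add: Pair_vimage_UN_single_valued)
    show "s i t \<noteq> s j t" if "i \<in> {1..N}" "j \<in> {1..N}" "i \<noteq> j" "t \<in> T i \<inter> T j" for i j t
    proof -
      have "i - 1 \<noteq> j - 1"
        using that by auto
      then have "H (i - 1) \<inter> H (j - 1) = {}"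
        using H(3) by (simp add: disjoint_family_on_def)
      then show ?thesis
        using that unfolding T_def s_def by (intro the_neq_if_disjoint_single_valued H(2)) auto
    qed
  qed
qed

section \<open>Passing from the completion to the original measure\<close>

lemma sets_completion_sandwich:
  assumes "X \<in> sets (completion M)"
  obtains S Z where "S \<in> sets M" "Z \<in> null_sets M" "S \<subseteq> X" "X \<subseteq> S \<union> Z"
proof -
  from assms obtain S N Z where "X = S \<union> N" "N \<subseteq> Z" "Z \<in> null_sets M" "S \<in> sets M"
    by (rule sets_completionE)
  then show ?thesis
    using that by blast
qed

lemma completion_measurable_restrict_null:
  fixes f :: "'a \<Rightarrow> 'b::second_countable_topology"
  assumes T: "T \<in> sets (completion M)"
    and f: "f \<in> measurable (restrict_space (completion M) T) borel"
  obtains Z where "Z \<in> null_sets M" "T - Z \<in> sets M" "f \<in> measurable (restrict_space M (T - Z)) borel"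
proof -
  obtain B :: "'b set set" where B: "countable B" "topological_basis B"
    using ex_countable_basis by blast
  have T_space: "T \<subseteq> space M"
    using sets.sets_into_space[OF T] by simp
  have "f -` b \<inter> T \<in> sets (completion M)" if "b \<in> B" for b
  proof -
    have "f -` b \<inter> space (restrict_space (completion M) T) \<in> sets (restrict_space (completion M) T)"
      using topological_basis_open[OF B(2) that] by (intro measurable_sets[OF f]) simp
    then show ?thesis
      using T T_space by (simp add: space_restrict_space sets_restrict_space_iff Int_absorb2)
  qed
  then have "\<forall>b\<in>B. \<exists>p. fst p \<in> sets M \<and> snd p \<in> null_sets M \<and> fst p \<subseteq> f -` b \<inter> T
      \<and> f -` b \<inter> T \<subseteq> fst p \<union> snd p"
    by (metis sets_completion_sandwich fst_conv snd_conv)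
  from bchoice[OF this] obtain p where p: "\<And>b. b \<in> B \<Longrightarrow> fst (p b) \<in> sets M
      \<and> snd (p b) \<in> null_sets M \<and> fst (p b) \<subseteq> f -` b \<inter> T \<and> f -` b \<inter> T \<subseteq> fst (p b) \<union> snd (p b)"
    by blast
  obtain S NT where S: "S \<in> sets M" "NT \<in> null_sets M" "S \<subseteq> T" "T \<subseteq> S \<union> NT"
    using T by (rule sets_completion_sandwich)
  define Z where "Z = NT \<union> (\<Union>b\<in>B. snd (p b))"
  have Z: "Z \<in> null_sets M"
    unfolding Z_def using p B(1) S(2) by (intro null_sets.Un null_sets_UN') auto
  have TZ: "T - Z \<in> sets M"
  proof -
    have "T - Z = S - Z"
      using S unfolding Z_def by blast
    then show ?thesis
      using S(1) Z by auto
  qed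
  have "f \<in> measurable (restrict_space M (T - Z)) (sigma UNIV B)"
  proof (rule measurable_measure_of)
    fix b assume b: "b \<in> B"
    have "f -` b \<inter> (T - Z) = fst (p b) - Z"
      using p[OF b] b unfolding Z_def by blast
    moreover have "fst (p b) - Z \<in> sets M"
      using p[OF b] Z by auto
    ultimately show "f -` b \<inter> space (restrict_space M (T - Z)) \<in> sets (restrict_space M (T - Z))"
      using TZ T_space by (auto simp: space_restrict_space sets_restrict_space_iff Int_absorb2)
  qed auto
  then have "f \<in> measurable (restrict_space M (T - Z)) borel"
    by (simp add: borel_eq_countable_basis[OF B])
  then show ?thesis
    using that Z TZ by blast
qed

lemma completion_measurable_family_restrict_null:
  fixes s :: "'i \<Rightarrow> 'a \<Rightarrow> 'b::second_countable_topology"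
  assumes "countable I" and T: "\<And>i. i \<in> I \<Longrightarrow> T i \<in> sets (completion M)"
    and s: "\<And>i. i \<in> I \<Longrightarrow> s i \<in> measurable (restrict_space (completion M) (T i)) borel"
  obtains Z where "Z \<in> null_sets M" "\<And>i. i \<in> I \<Longrightarrow> T i - Z \<in> sets M"
    "\<And>i. i \<in> I \<Longrightarrow> s i \<in> measurable (restrict_space M (T i - Z)) borel"
proof -
  have "\<forall>i\<in>I. \<exists>Z. Z \<in> null_sets M \<and> T i - Z \<in> sets M \<and> s i \<in> measurable (restrict_space M (T i - Z)) borel"
    using completion_measurable_restrict_null[OF T s] by metis
  from bchoice[OF this] obtain Z where Z: "\<And>i. i \<in> I \<Longrightarrow> Z i \<in> null_sets M"
    "\<And>i. i \<in> I \<Longrightarrow> T i - Z i \<in> sets M"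
    "\<And>i. i \<in> I \<Longrightarrow> s i \<in> measurable (restrict_space M (T i - Z i)) borel"
    by blast
  define Z' where "Z' = (\<Union>i\<in>I. Z i)"
  have Z': "Z' \<in> null_sets M"
    unfolding Z'_def using Z(1) assms(1) by (intro null_sets_UN') auto
  have T_Z': "T i - Z' \<in> sets M" if "i \<in> I" for i
  proof -
    have "T i - Z' = (T i - Z i) - Z'"
      using that unfolding Z'_def by blast
    then show ?thesis
      using Z(2)[OF that] Z' by auto
  qed
  moreover have "s i \<in> measurable (restrict_space M (T i - Z')) borel" if "i \<in> I" for i
  proof -
    have T_space: "T i \<subseteq> space M"
      using sets.sets_into_space[OF T[OF that]] by simp
    have "restrict_space (restrict_space M (T i - Z i)) (T i - Z') = restrict_space M (T i - Z')"
      using Z(2)[OF that] T_Z'[OF that] T_space that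
      by (subst restrict_restrict_space) (auto simp: Int_absorb2 Z'_def intro!: arg_cong[where f="restrict_space M"])
    then show ?thesis
      using measurable_restrict_space1[OF Z(3)[OF that], of "T i - Z'"] by simp
  qed
  ultimately show ?thesis
    using that Z' T_Z' by blast
qed

theorem theoremA6:
  fixes M :: "'a measure" and \<Gamma> :: "'a \<Rightarrow> 'b::polish_space set" and N :: nat
  assumes "finite_measure M"
    and "N \<ge> 1"
    and "\<forall>t\<in>space M. \<Gamma> t \<noteq> {} \<and> finite (\<Gamma> t) \<and> card (\<Gamma> t) \<le> N"
    and "{(t, x). t \<in> space M \<and> x \<in> \<Gamma> t} \<in> sets (completion M \<Otimes>\<^sub>M borel)"
  shows "\<exists>n \<le> N. \<exists>(Ts :: nat \<Rightarrow> 'a set) (s :: nat \<Rightarrow> 'a \<Rightarrow> 'b).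
           (\<forall>i\<in>{1..n}. Ts i \<in> sets M \<and> s i \<in> measurable (restrict_space M (Ts i)) borel)
         \<and> (\<exists>T0 \<in> sets M. emeasure M T0 = emeasure M (space M)
              \<and> (\<forall>t\<in>T0. \<Gamma> t = {s i t | i. i \<in> {1..n} \<and> t \<in> Ts i}))
         \<and> (\<forall>i\<in>{1..n}. \<forall>j\<in>{1..n}. i \<noteq> j \<longrightarrow> (\<forall>t \<in> Ts i \<inter> Ts j. s i t \<noteq> s j t))"
proof -
  define G where "G = {(t, x). t \<in> space M \<and> x \<in> \<Gamma> t}"
  have G_sec: "Pair t -` G = (if t \<in> space M then \<Gamma> t else {})" for t
    by (auto simp: G_def)
  have "finite (Pair t -` G)" "card (Pair t -` G) \<le> N" for t
    using assms(3) unfolding G_sec by auto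
  then obtain T s where T: "\<And>i. i \<in> {1..N} \<Longrightarrow> T i \<in> sets (completion M)"
    and s: "\<And>i. i \<in> {1..N} \<Longrightarrow> s i \<in> measurable (restrict_space (completion M) (T i)) borel"
    and \<Gamma>: "\<And>t. Pair t -` G = {s i t | i. i \<in> {1..N} \<and> t \<in> T i}"
    and distinct: "\<And>i j t. i \<in> {1..N} \<Longrightarrow> j \<in> {1..N} \<Longrightarrow> i \<noteq> j \<Longrightarrow> t \<in> T i \<inter> T j \<Longrightarrow> s i t \<noteq> s j t"
    by (rule finite_section_selectors_completion[OF assms(1) assms(4)[folded G_def]]) blast
  obtain Z where Z: "Z \<in> null_sets M" "\<And>i. i \<in> {1..N} \<Longrightarrow> T i - Z \<in> sets M"
    "\<And>i. i \<in> {1..N} \<Longrightarrow> s i \<in> measurable (restrict_space M (T i - Z)) borel"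
    using completion_measurable_family_restrict_null[of "{1..N}" T M s] T s by blast
  have "\<Gamma> t = {s i t | i. i \<in> {1..N} \<and> t \<in> T i - Z}" if "t \<in> space M - Z" for t
    using \<Gamma>[of t] that unfolding G_sec by simp
  moreover have "space M - Z \<in> sets M" "emeasure M (space M - Z) = emeasure M (space M)"
    using Z(1) by (auto intro: emeasure_Diff_null_set)
  ultimately show ?thesis
    using Z distinct by (intro exI[of _ N] exI[of _ "\<lambda>i. T i - Z"] exI[of _ s] conjI bexI[of _ "space M - Z"]) auto
qed

end
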